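(* Let $r$ denote either the max rank or the submax rank. If $\mathscr X\in\mathbb R^{I_1\times\cdots\times I_N}$ is a nonzero tensor, then there is a subtensor $\mathscr Y\in\mathbb R^{J_1\times\cdots\times J_N}$ of $\mathscr X$ such that $r(\mathscr X)=r(\mathscr Y)=J_n$ for some $n$ with $1\leq n\leq N$.
   Context: All tensors are real. For $\mathscr X\in\mathbb R^{I_1\times\cdots\times I_N}$, the mode-$n$ unfolding $\mathbf X_{(n)}$ is the $I_n\times\prod_{k\neq n}I_k$ matrix whose rows are indexed by $i_n$ and whose columns are exactly the vectors obtained from $\mathscr X$ by fixing all indices other than $i_n$; let $R_n=\operatorname{rank}(\mathbf X_{(n)})$. The max rank is $r(\mathscr X)=\max\{R_1,\dots,R_N\}$. The submax rank is $r(\mathscr X)=\operatorname{submax}\{R_1,\dots,R_N\}$, where for $N>1$ the submax of a multiset is its second largest value counted with multiplicity (e.g. $\operatorname{submax}\{1,2,3,3\}=3$), and $\operatorname{submax}\{R_1\}=R_1$ if $N=1$. A subtensor of $\mathscr X$ is a tensor $\mathscr Y\in\mathbb R^{J_1\times\cdots\times J_N}$ with $1\le J_n\le I_n$ of the form $y_{j_1\cdots j_N}=x_{i_{1j_1}\cdots i_{Nj_N}}$ for some indices $1\leq i_{n1}<\cdots<i_{nJ_n}\leq I_n$. *)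

theory Defs
  imports "HOL-Analysis.Analysis" "HOL-Library.Function_Algebras"
begin

text \<open>An order-N real tensor with dimensions I 0, ..., I (N-1) (0-based modes and indices)
  is a function on multi-indices; only its values on tidx N I matter.\<close>

definition tidx :: "nat \<Rightarrow> (nat \<Rightarrow> nat) \<Rightarrow> (nat \<Rightarrow> nat) set" where
  "tidx N I = PiE {..<N} (\<lambda>n. {..<I n})"

text \<open>Mode-n fiber through multi-index i: a column of the mode-n unfolding, as a vector
  in R^(I n) represented by a function nat => real vanishing outside {..<I n}.\<close>

definition fiber :: "nat \<Rightarrow> (nat \<Rightarrow> nat) \<Rightarrow> ((nat \<Rightarrow> nat) \<Rightarrow> real) \<Rightarrow> nat \<Rightarrow> (nat \<Rightarrow> nat) \<Rightarrow> (nat \<Rightarrow> real)" where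
  "fiber N I X n i = (\<lambda>k. if k < I n then X (i(n := k)) else 0)"

text \<open>Rank of the mode-n unfolding = dimension of its column space.\<close>

definition mode_rank :: "nat \<Rightarrow> (nat \<Rightarrow> nat) \<Rightarrow> ((nat \<Rightarrow> nat) \<Rightarrow> real) \<Rightarrow> nat \<Rightarrow> nat" where
  "mode_rank N I X n =
     vector_space.dim (\<lambda>(c::real) (v::nat \<Rightarrow> real) x. c * v x) {fiber N I X n i | i. i \<in> tidx N I}"

definition max_rank :: "nat \<Rightarrow> (nat \<Rightarrow> nat) \<Rightarrow> ((nat \<Rightarrow> nat) \<Rightarrow> real) \<Rightarrow> nat" where
  "max_rank N I X = Max (mode_rank N I X ` {..<N})"

definition submax_rank :: "nat \<Rightarrow> (nat \<Rightarrow> nat) \<Rightarrow> ((nat \<Rightarrow> nat) \<Rightarrow> real) \<Rightarrow> nat" where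
  "submax_rank N I X =
     (if N = 1 then mode_rank N I X 0 else rev (sort (map (mode_rank N I X) [0..<N])) ! 1)"

definition is_subtensor :: "nat \<Rightarrow> (nat \<Rightarrow> nat) \<Rightarrow> ((nat \<Rightarrow> nat) \<Rightarrow> real)
    \<Rightarrow> (nat \<Rightarrow> nat) \<Rightarrow> ((nat \<Rightarrow> nat) \<Rightarrow> real) \<Rightarrow> bool" where
  "is_subtensor N I X J Y \<longleftrightarrow>
     (\<exists>\<sigma> :: nat \<Rightarrow> nat \<Rightarrow> nat.
        (\<forall>n<N. 1 \<le> J n \<and> J n \<le> I n \<and> strict_mono_on {..<J n} (\<sigma> n)
               \<and> \<sigma> n ` {..<J n} \<subseteq> {..<I n}) \<and>
        (\<forall>j \<in> tidx N J. Y j = X (\<lambda>n\<in>{..<N}. \<sigma> n (j n))))"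

end

theory Submission
  imports Defs
begin

(* Both the max rank and the submax rank equal the rank R of some unfolding X_(n).
   A Lagrange basis of the column space of X_(n) yields R mode-n indices S such that
   every vector of that space is a fixed linear combination of its entries at S.
   Keeping only the mode-n slices indexed by S gives a subtensor Y with J_n = R.
   For k other than n the column space of the mode-k unfolding does not change:
   every mode-k fiber of X is a combination of fibers through the kept slices, and
   these are fibers of Y. For k = n, restriction to S is injective on the column
   space of X_(n). So Y has the same mode ranks as X, hence the same r. *)

(* The scaling with respect to which mode_rank is defined; function spaces carry no
   real_vector instance, so the generic locale is interpreted directly. *)
interpretation pointwise: vector_space "\<lambda>(c::real) (v::'a \<Rightarrow> real) x. c * v x"
  by unfold_locales (auto simp: fun_eq_iff algebra_simps)

interpretation pointwise_pair:
  vector_space_pair "\<lambda>(c::real) (v::'a \<Rightarrow> real) x. c * v x"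
    "\<lambda>(c::real) (v::'b \<Rightarrow> real) x. c * v x" ..

lemma sum_fun_apply: "sum f A x = (\<Sum>a\<in>A. f a x :: 'b::comm_monoid_add)"
  by (induction A rule: infinite_finite_induct) auto

(* The library's dim_image_eq assumes a finite-dimensional domain; the argument does not need it. *)
lemma (in vector_space_pair) dim_image_eq_of_inj_on_span:
  assumes f: "Vector_Spaces.linear s1 s2 f" and inj: "inj_on f (vs1.span S)"
  shows "vs2.dim (f ` S) = vs1.dim S"
proof -
  obtain B where B: "B \<subseteq> S" "vs1.independent B" "S \<subseteq> vs1.span B" "card B = vs1.dim S"
    using vs1.basis_exists by blast
  have span_B: "vs1.span B = vs1.span S"
    using B(1,3) vs1.span_eq vs1.span_superset by (metis subset_trans)
  have "vs2.span (f ` S) = vs2.span (f ` B)"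
    unfolding linear_span_image[OF f] span_B ..
  then have "vs2.dim (f ` S) = vs2.dim (f ` B)"
    by (rule vs2.span_eq_dim)
  also have "\<dots> = card (f ` B)"
    using inj unfolding span_B[symmetric]
    by (intro vs2.dim_eq_card_independent linear_independent_injective_image[OF f B(2)])
  also have "\<dots> = card B"
    using inj B(1) vs1.span_superset by (intro card_image inj_on_subset[OF inj]) blast
  finally show ?thesis using B(4) by simp
qed

lemma pointwise_span_vanishing:
  assumes "\<forall>b\<in>B. \<forall>x. x \<notin> A \<longrightarrow> b x = 0" "v \<in> pointwise.span B" "x \<notin> A"
  shows "v x = (0::real)"
proof -
  have "pointwise.subspace {v :: 'a \<Rightarrow> real. \<forall>x. x \<notin> A \<longrightarrow> v x = 0}"
    unfolding pointwise.subspace_def by simp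
  then have "pointwise.span B \<subseteq> {v. \<forall>x. x \<notin> A \<longrightarrow> v x = 0}"
    using assms(1) by (intro pointwise.span_minimal) auto
  then show ?thesis using assms(2,3) by blast
qed

definition lagrange_basis :: "'a set \<Rightarrow> ('a \<Rightarrow> 'a \<Rightarrow> real) \<Rightarrow> bool" where
  "lagrange_basis S u \<longleftrightarrow> (\<forall>s\<in>S. \<forall>t\<in>S. u s t = (if s = t then 1 else 0))"

lemma sum_lagrange_basis_at_node:
  assumes "finite S" "lagrange_basis S u" "t \<in> S"
  shows "(\<Sum>s\<in>S. c s * u s t) = c t"
proof -
  have "(\<Sum>s\<in>S. c s * u s t) = (\<Sum>s\<in>S. if s = t then c s else 0)"
    using assms(2,3) by (intro sum.cong) (auto simp: lagrange_basis_def)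
  then show ?thesis using assms(1,3) by simp
qed

lemma pointwise_independent_lagrange_basis:
  assumes "finite S" "lagrange_basis S u"
  shows "inj_on u S" "pointwise.independent (u ` S)"
proof -
  show inj: "inj_on u S"
  proof (rule inj_onI)
    fix s t assume "s \<in> S" "t \<in> S" "u s = u t"
    then show "s = t" using assms(2) unfolding lagrange_basis_def by (metis zero_neq_one)
  qed
  show "pointwise.independent (u ` S)"
  proof (rule pointwise.independent_if_scalars_zero)
    fix c w assume sum0: "(\<Sum>w\<in>u ` S. (\<lambda>x. c w * w x)) = 0" and "w \<in> u ` S"
    then obtain t where t: "t \<in> S" "w = u t" by blast
    have "0 = (\<Sum>w\<in>u ` S. (\<lambda>x. c w * w x)) t" using sum0 by simp
    also have "\<dots> = (\<Sum>s\<in>S. c (u s) * u s t)"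
      unfolding sum_fun_apply sum.reindex[OF inj] by simp
    also have "\<dots> = c w" using sum_lagrange_basis_at_node[OF assms t(1)] t(2) by simp
    finally show "c w = 0" by simp
  qed (use assms(1) in simp)
qed

lemma pointwise_lagrange_basis_exists:
  fixes B :: "('a \<Rightarrow> real) set"
  assumes "finite B" "pointwise.independent B"
  shows "\<exists>S u. finite S \<and> card S = card B \<and> (\<forall>s\<in>S. u s \<in> pointwise.span B)
    \<and> lagrange_basis S u"
  using assms
proof (induction B rule: finite_induct)
  case empty
  show ?case by (rule exI[of _ "{}"]) (simp add: lagrange_basis_def)
next
  case (insert b B)
  have b: "b \<notin> pointwise.span B" and "pointwise.independent B"
    using insert.prems insert.hyps(2) by (simp_all add: pointwise.independent_insert)
  then obtain S u where S: "finite S" "card S = card B" "\<forall>s\<in>S. u s \<in> pointwise.span B"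
      "lagrange_basis S u"
    using insert.IH by blast
  have span_mono: "pointwise.span B \<subseteq> pointwise.span (insert b B)"
    by (rule pointwise.span_mono) blast
  \<comment> \<open>b minus its interpolant on S vanishes on S but not identically: a new node t\<close>
  define c where "c = b - (\<Sum>s\<in>S. (\<lambda>x. b s * u s x))"
  have c_S: "c s = 0" if "s \<in> S" for s
    using sum_lagrange_basis_at_node[OF S(1,4) that] by (simp add: c_def sum_fun_apply)
  have c_span: "c \<in> pointwise.span (insert b B)"
    unfolding c_def using S(3) span_mono
    by (intro pointwise.span_diff pointwise.span_sum pointwise.span_scale)
      (auto intro: pointwise.span_base)
  have "c \<noteq> 0"
  proof
    assume "c = 0"
    then have "b = (\<Sum>s\<in>S. (\<lambda>x. b s * u s x))" by (simp add: c_def)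
    moreover have "(\<Sum>s\<in>S. (\<lambda>x. b s * u s x)) \<in> pointwise.span B"
      using S(3) by (intro pointwise.span_sum pointwise.span_scale) auto
    ultimately show False using b by simp
  qed
  then obtain t where t: "c t \<noteq> 0" by (auto simp: fun_eq_iff)
  with c_S have "t \<notin> S" by blast
  define d where "d = (\<lambda>x. c x / c t)"
  have d_span: "d \<in> pointwise.span (insert b B)"
    using pointwise.span_scale[OF c_span, of "1 / c t"] by (simp add: d_def)
  define u' where "u' s = (if s = t then d else (\<lambda>x. u s x - u s t * d x))" for s
  have "u' s \<in> pointwise.span (insert b B)" if "s \<in> insert t S" for s
  proof (cases "s = t")
    case False
    then have "u s \<in> pointwise.span (insert b B)" using S(3) span_mono that by auto
    then have "u s - (\<lambda>x. u s t * d x) \<in> pointwise.span (insert b B)"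
      by (intro pointwise.span_diff pointwise.span_scale[OF d_span, simplified])
    then show ?thesis using False by (simp add: u'_def fun_diff_def)
  qed (simp add: u'_def d_span)
  moreover have "lagrange_basis (insert t S) u'"
    using S(4) c_S t \<open>t \<notin> S\<close> by (auto simp: lagrange_basis_def u'_def d_def)
  moreover have "card (insert t S) = card (insert b B)"
    using S(1,2) \<open>t \<notin> S\<close> insert.hyps by simp
  ultimately show ?case using S(1) by blast
qed

lemma pointwise_lagrange_expansion:
  assumes B: "finite B" "pointwise.independent B"
    and S: "finite S" "card S = card B" "\<forall>s\<in>S. u s \<in> pointwise.span B" "lagrange_basis S u"
    and v: "v \<in> pointwise.span B"
  shows "v x = (\<Sum>s\<in>S. v s * u s x)"
proof -
  note inj = pointwise_independent_lagrange_basis(1)[OF S(1,4)]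
  have "v \<in> pointwise.span (u ` S)"
  proof (rule ccontr)
    assume v_out: "v \<notin> pointwise.span (u ` S)"
    then have "pointwise.independent (insert v (u ` S))"
      using pointwise_independent_lagrange_basis(2)[OF S(1,4)] pointwise.independent_insertI by blast
    moreover have "insert v (u ` S) \<subseteq> pointwise.span B" using S(3) v by blast
    ultimately have "card (insert v (u ` S)) \<le> card B"
      using pointwise.independent_span_bound[OF B(1)] by blast
    moreover have "v \<notin> u ` S" using v_out pointwise.span_base by blast
    ultimately show False using S(1,2) card_image[OF inj] by simp
  qed
  then obtain c where "v = (\<Sum>w\<in>u ` S. (\<lambda>x. c w * w x))"
    using pointwise.span_finite[of "u ` S"] S(1) by auto
  then have v_eq: "v y = (\<Sum>s\<in>S. c (u s) * u s y)" for y
    by (simp add: sum_fun_apply sum.reindex[OF inj])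
  have "v s = c (u s)" if "s \<in> S" for s
    unfolding v_eq using sum_lagrange_basis_at_node[OF S(1,4) that] .
  then show ?thesis unfolding v_eq[of x] by simp
qed

lemma mem_tidx_iff:
  "i \<in> tidx N I \<longleftrightarrow> (\<forall>k<N. i k < I k) \<and> (\<forall>k. N \<le> k \<longrightarrow> i k = undefined)"
  by (auto simp: tidx_def PiE_def extensional_def Pi_def)

lemma tidx_upd: "i \<in> tidx N I \<Longrightarrow> k < N \<Longrightarrow> p < I k \<Longrightarrow> i(k := p) \<in> tidx N I"
  by (auto simp: mem_tidx_iff)

lemma finite_tidx: "finite (tidx N I)"
  unfolding tidx_def by (rule finite_PiE) auto

lemma fiber_upd_same [simp]: "fiber N I X n (i(n := t)) = fiber N I X n i"
  unfolding fiber_def by (simp only: fun_upd_upd)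

lemma mode_rank_eq_dim: "mode_rank N I X n = pointwise.dim (fiber N I X n ` tidx N I)"
  unfolding mode_rank_def Setcompr_eq_image ..

lemma mode_unfolding_interpolation_exists:
  obtains S u where "S \<subseteq> {..<I n}" "card S = mode_rank N I X n"
    "\<And>v x. v \<in> pointwise.span (fiber N I X n ` tidx N I) \<Longrightarrow> v x = (\<Sum>s\<in>S. v s * u s x)"
proof -
  let ?F = "fiber N I X n ` tidx N I"
  obtain B where B: "B \<subseteq> ?F" "pointwise.independent B" "?F \<subseteq> pointwise.span B"
      "card B = pointwise.dim ?F"
    using pointwise.basis_exists by blast
  have finite_B: "finite B" using B(1) finite_tidx finite_subset by blast
  have span_B: "pointwise.span B = pointwise.span ?F"
    using B(1,3) pointwise.span_eq pointwise.span_superset by (metis subset_trans)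
  obtain S u where S: "finite S" "card S = card B" "\<forall>s\<in>S. u s \<in> pointwise.span B"
      "lagrange_basis S u"
    using pointwise_lagrange_basis_exists[OF finite_B B(2)] by blast
  show ?thesis
  proof (rule that)
    show "S \<subseteq> {..<I n}"
    proof
      fix s assume s: "s \<in> S"
      have "\<forall>f\<in>?F. \<forall>x. x \<notin> {..<I n} \<longrightarrow> f x = 0" by (auto simp: fiber_def)
      moreover have "u s \<in> pointwise.span ?F" using S(3) s span_B by blast
      moreover have "u s s \<noteq> 0" using S(4) s by (simp add: lagrange_basis_def)
      ultimately show "s \<in> {..<I n}" using pointwise_span_vanishing[of ?F "{..<I n}" "u s" s] by blast
    qed
    show "card S = mode_rank N I X n" using S(2) B(4) by (simp add: mode_rank_eq_dim)
    show "v x = (\<Sum>s\<in>S. v s * u s x)" if "v \<in> pointwise.span ?F" for v x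
      using pointwise_lagrange_expansion[OF finite_B B(2) S] span_B that by blast
  qed
qed

definition mode_select ::
    "nat \<Rightarrow> (nat \<Rightarrow> nat) \<Rightarrow> ((nat \<Rightarrow> nat) \<Rightarrow> real) \<Rightarrow> (nat \<Rightarrow> nat) \<Rightarrow> real" where
  "mode_select n \<sigma> X j = X (j(n := \<sigma> (j n)))"

lemma tidx_mode_select:
  assumes "n < N" "\<sigma> ` {..<R} \<subseteq> {..<I n}" "j \<in> tidx N (I(n := R))"
  shows "j(n := \<sigma> (j n)) \<in> tidx N I"
  using assms by (fastforce simp: mem_tidx_iff split: if_splits)

lemma is_subtensor_mode_select:
  assumes "n < N" "\<forall>k<N. 1 \<le> I k" "0 < R" "strict_mono_on {..<R} \<sigma>" "\<sigma> ` {..<R} \<subseteq> {..<I n}"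
  shows "is_subtensor N I X (I(n := R)) (mode_select n \<sigma> X)"
  unfolding is_subtensor_def
proof (intro exI[of _ "\<lambda>k. if k = n then \<sigma> else id"] conjI allI impI ballI)
  have "R \<le> I n"
    using card_inj_on_le[OF strict_mono_on_imp_inj_on[OF assms(4)] assms(5)] by simp
  then show "1 \<le> (I(n := R)) k" "(I(n := R)) k \<le> I k" if "k < N" for k
    using assms(2,3) that by auto
  show "strict_mono_on {..<(I(n := R)) k} (if k = n then \<sigma> else id)" for k
    using assms(4) by (auto simp: strict_mono_on_def)
  show "(if k = n then \<sigma> else id) ` {..<(I(n := R)) k} \<subseteq> {..<I k}" for k
    using assms(5) by auto
next
  fix j assume "j \<in> tidx N (I(n := R))"
  then have "(\<lambda>k\<in>{..<N}. (if k = n then \<sigma> else id) (j k)) = j(n := \<sigma> (j n))"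
    using assms(1) by (auto simp: fun_eq_iff mem_tidx_iff)
  then show "mode_select n \<sigma> X j = X (\<lambda>k\<in>{..<N}. (if k = n then \<sigma> else id) (j k))"
    by (simp add: mode_select_def)
qed

lemma mode_rank_mode_select_other:
  assumes "n < N" "k < N" "k \<noteq> n" "\<sigma> ` {..<R} \<subseteq> {..<I n}"
    and slices: "\<And>i t. i \<in> tidx N I \<Longrightarrow> t < I n \<Longrightarrow>
      X (i(n := t)) = (\<Sum>q<R. c t q * X (i(n := \<sigma> q)))"
  shows "mode_rank N (I(n := R)) (mode_select n \<sigma> X) k = mode_rank N I X k"
proof -
  let ?F = "fiber N I X k ` tidx N I"
  let ?G = "fiber N (I(n := R)) (mode_select n \<sigma> X) k ` tidx N (I(n := R))"
  have fiber_eq: "fiber N (I(n := R)) (mode_select n \<sigma> X) k j = fiber N I X k (j(n := \<sigma> (j n)))" for j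
    using assms(3) by (auto simp: fiber_def mode_select_def fun_upd_twist)
  have "?G \<subseteq> ?F"
  proof (rule image_subsetI)
    fix j assume "j \<in> tidx N (I(n := R))"
    then show "fiber N (I(n := R)) (mode_select n \<sigma> X) k j \<in> ?F"
      unfolding fiber_eq by (intro imageI tidx_mode_select[of n N \<sigma> R I, OF assms(1,4)])
  qed
  then have "?G \<subseteq> pointwise.span ?F"
    using pointwise.span_superset by (rule subset_trans)
  moreover have "?F \<subseteq> pointwise.span ?G"
  proof
    fix f assume "f \<in> ?F"
    then obtain i where i: "i \<in> tidx N I" "f = fiber N I X k i" by blast
    have slice_fibers: "fiber N I X k (i(n := \<sigma> q)) \<in> ?G" if "q < R" for q
    proof -
      have "i(n := q) \<in> tidx N (I(n := R))" using i(1) assms(1) that by (auto simp: mem_tidx_iff)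
      then show ?thesis
        by (rule rev_image_eqI) (simp add: fiber_eq)
    qed
    have "f = (\<Sum>q<R. (\<lambda>x. c (i n) q * fiber N I X k (i(n := \<sigma> q)) x))"
    proof
      fix p
      have "X (i(k := p)) = (\<Sum>q<R. c (i n) q * X (i(k := p, n := \<sigma> q)))" if "p < I k"
      proof -
        have "i(k := p, n := i n) = i(k := p)" using assms(3) by (simp add: fun_eq_iff)
        then show ?thesis
          using slices[of "i(k := p)" "i n"] tidx_upd[OF i(1) assms(2) that] i(1) assms(1)
          by (simp add: mem_tidx_iff)
      qed
      then show "f p = (\<Sum>q<R. (\<lambda>x. c (i n) q * fiber N I X k (i(n := \<sigma> q)) x)) p"
        using assms(3) by (simp add: i(2) fiber_def sum_fun_apply fun_upd_twist)
    qed
    also have "\<dots> \<in> pointwise.span ?G"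
      using slice_fibers by (intro pointwise.span_sum pointwise.span_scale pointwise.span_base) auto
    finally show "f \<in> pointwise.span ?G" .
  qed
  ultimately have "pointwise.span ?G = pointwise.span ?F"
    by (simp only: pointwise.span_eq)
  then show ?thesis unfolding mode_rank_eq_dim by (rule pointwise.span_eq_dim)
qed

lemma mode_rank_mode_select_same:
  assumes "n < N" "0 < R" "\<sigma> ` {..<R} \<subseteq> {..<I n}"
    and restriction_inj: "\<And>v. v \<in> pointwise.span (fiber N I X n ` tidx N I) \<Longrightarrow>
      \<forall>q<R. v (\<sigma> q) = 0 \<Longrightarrow> v = 0"
  shows "mode_rank N (I(n := R)) (mode_select n \<sigma> X) n = mode_rank N I X n"
proof -
  let ?F = "fiber N I X n ` tidx N I"
  define P where "P v = (\<lambda>q. if q < R then v (\<sigma> q) else 0)" for v :: "nat \<Rightarrow> real"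
  have linear_P: "Vector_Spaces.linear (\<lambda>c v x. c * v x) (\<lambda>c v x. c * v x) P"
    by (auto simp: Vector_Spaces.linear_iff P_def fun_eq_iff pointwise.vector_space_axioms)
  have "inj_on P (pointwise.span ?F)"
    using restriction_inj
    by (auto simp: pointwise_pair.linear_inj_on_iff_eq_0[OF linear_P pointwise.subspace_span]
        P_def fun_eq_iff)
  then have dim_eq: "pointwise.dim (P ` ?F) = pointwise.dim ?F"
    by (rule pointwise_pair.dim_image_eq_of_inj_on_span[OF linear_P])
  have fiber_eq: "fiber N (I(n := R)) (mode_select n \<sigma> X) n j = P (fiber N I X n j)" for j
    using assms(3) unfolding fiber_def mode_select_def P_def fun_upd_same fun_upd_upd
    by (auto simp: fun_eq_iff image_subset_iff)
  have image_eq: "fiber N (I(n := R)) (mode_select n \<sigma> X) n ` tidx N (I(n := R)) = P ` ?F"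
    unfolding image_image
  proof (intro equalityI image_subsetI)
    fix j assume "j \<in> tidx N (I(n := R))"
    then have "j(n := \<sigma> (j n)) \<in> tidx N I"
      by (rule tidx_mode_select[of n N \<sigma> R I, OF assms(1,3)])
    then show "fiber N (I(n := R)) (mode_select n \<sigma> X) n j \<in> (\<lambda>i. P (fiber N I X n i)) ` tidx N I"
      unfolding fiber_eq by (rule rev_image_eqI) simp
  next
    fix i assume "i \<in> tidx N I"
    then have "i(n := 0) \<in> tidx N (I(n := R))" using assms(1,2) by (auto simp: mem_tidx_iff)
    then show "P (fiber N I X n i) \<in> fiber N (I(n := R)) (mode_select n \<sigma> X) n ` tidx N (I(n := R))"
      by (rule rev_image_eqI) (simp add: fiber_eq)
  qed
  show ?thesis unfolding mode_rank_eq_dim image_eq dim_eq ..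
qed

lemma mode_select_at_interpolation_nodes:
  fixes u :: "nat \<Rightarrow> nat \<Rightarrow> real"
  assumes "n < N" "\<forall>k<N. 1 \<le> I k" "S \<noteq> {}" "S \<subseteq> {..<I n}"
    and interpolation: "\<And>v x. v \<in> pointwise.span (fiber N I X n ` tidx N I) \<Longrightarrow>
      v x = (\<Sum>s\<in>S. v s * u s x)"
  defines "R \<equiv> card S" and "\<sigma> \<equiv> enumerate S"
  shows "is_subtensor N I X (I(n := R)) (mode_select n \<sigma> X)"
    and "\<And>k. k < N \<Longrightarrow> mode_rank N (I(n := R)) (mode_select n \<sigma> X) k = mode_rank N I X k"
proof -
  have "finite S" using assms(4) finite_subset by blast
  then have "0 < R" using assms(3) by (simp add: R_def card_gt_0_iff)
  have \<sigma>_bij: "bij_betw \<sigma> {..<R} S"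
    unfolding \<sigma>_def R_def using \<open>finite S\<close> by (rule finite_bij_enumerate)
  have \<sigma>_image: "\<sigma> ` {..<R} = S" using \<sigma>_bij by (rule bij_betw_imp_surj_on)
  with assms(4) have \<sigma>_range: "\<sigma> ` {..<R} \<subseteq> {..<I n}" by simp
  have "strict_mono_on {..<R} \<sigma>"
    unfolding \<sigma>_def R_def using finite_enumerate_mono[OF _ \<open>finite S\<close>]
    by (simp add: strict_mono_on_def)
  with assms(1,2) \<open>0 < R\<close> \<sigma>_range show "is_subtensor N I X (I(n := R)) (mode_select n \<sigma> X)"
    by (intro is_subtensor_mode_select)
  have slices: "X (i(n := t)) = (\<Sum>q<R. u (\<sigma> q) t * X (i(n := \<sigma> q)))"
    if "i \<in> tidx N I" "t < I n" for i t
  proof -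
    have "fiber N I X n i \<in> pointwise.span (fiber N I X n ` tidx N I)"
      using that(1) by (blast intro: pointwise.span_base)
    then have "X (i(n := t)) = (\<Sum>s\<in>S. fiber N I X n i s * u s t)"
      using interpolation[of _ t] that(2) by (simp add: fiber_def)
    also have "\<dots> = (\<Sum>q<R. u (\<sigma> q) t * X (i(n := \<sigma> q)))"
      using \<sigma>_range by (simp add: sum.reindex_bij_betw[OF \<sigma>_bij, symmetric] fiber_def
          image_subset_iff mult.commute)
    finally show ?thesis .
  qed
  have restriction_inj: "v = 0"
    if "v \<in> pointwise.span (fiber N I X n ` tidx N I)" "\<forall>q<R. v (\<sigma> q) = 0" for v
  proof
    fix x
    have "v s = 0" if "s \<in> S" for s
      using that \<open>\<forall>q<R. v (\<sigma> q) = 0\<close> unfolding \<sigma>_image[symmetric] by blast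
    then have "(\<Sum>s\<in>S. v s * u s x) = 0" by simp
    then show "v x = 0 x" using interpolation[OF \<open>v \<in> pointwise.span _\<close>, of x] by simp
  qed
  show "mode_rank N (I(n := R)) (mode_select n \<sigma> X) k = mode_rank N I X k" if "k < N" for k
  proof (cases "k = n")
    case True
    show ?thesis
      unfolding True
      by (rule mode_rank_mode_select_same[where I = I, OF assms(1) \<open>0 < R\<close> \<sigma>_range
            restriction_inj])
  next
    case False
    then show ?thesis
      by (rule mode_rank_mode_select_other[where I = I, OF assms(1) that _ \<sigma>_range slices])
  qed
qed

lemma exists_subtensor_preserving_mode_ranks:
  assumes "n < N" "\<forall>k<N. 1 \<le> I k" "\<exists>i\<in>tidx N I. X i \<noteq> 0"
  shows "\<exists>J Y. is_subtensor N I X J Y \<and> (\<forall>k<N. mode_rank N J Y k = mode_rank N I X k)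
    \<and> J n = mode_rank N I X n"
proof -
  obtain S and u :: "nat \<Rightarrow> nat \<Rightarrow> real" where S: "S \<subseteq> {..<I n}" "card S = mode_rank N I X n"
      and interpolation: "\<And>v x. v \<in> pointwise.span (fiber N I X n ` tidx N I) \<Longrightarrow>
        v x = (\<Sum>s\<in>S. v s * u s x)"
    using mode_unfolding_interpolation_exists[of I n N X] by blast
  have "S \<noteq> {}"
  proof
    assume "S = {}"
    obtain i where i: "i \<in> tidx N I" "X i \<noteq> 0" using assms(3) by blast
    then have "fiber N I X n i \<in> pointwise.span (fiber N I X n ` tidx N I)"
      by (blast intro: pointwise.span_base)
    then have "fiber N I X n i (i n) = 0" using interpolation \<open>S = {}\<close> by simp
    moreover have "i n < I n" using i(1) assms(1) by (simp add: mem_tidx_iff)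
    ultimately show False using i(2) by (simp add: fiber_def)
  qed
  note subtensor =
    mode_select_at_interpolation_nodes[OF assms(1,2) \<open>S \<noteq> {}\<close> S(1) interpolation]
  show ?thesis
    using subtensor S(2)
    by (intro exI[of _ "I(n := card S)"] exI[of _ "mode_select n (enumerate S) X"]) auto
qed

lemma max_rank_cong:
  "(\<And>k. k < N \<Longrightarrow> mode_rank N J Y k = mode_rank N I X k) \<Longrightarrow> max_rank N J Y = max_rank N I X"
  unfolding max_rank_def by (metis image_cong lessThan_iff)

lemma submax_rank_cong:
  assumes "\<And>k. k < N \<Longrightarrow> mode_rank N J Y k = mode_rank N I X k"
  shows "submax_rank N J Y = submax_rank N I X"
proof -
  have ranks_eq: "map (mode_rank N J Y) [0..<N] = map (mode_rank N I X) [0..<N]"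
    by (intro map_cong) (simp_all add: assms)
  show ?thesis unfolding submax_rank_def ranks_eq using assms[of 0] by auto
qed

lemma max_rank_attained:
  assumes "0 < N"
  shows "\<exists>n<N. max_rank N I X = mode_rank N I X n"
proof -
  have "Max (mode_rank N I X ` {..<N}) \<in> mode_rank N I X ` {..<N}"
    using assms by (intro Max_in) auto
  then show ?thesis unfolding max_rank_def by auto
qed

lemma submax_rank_attained: "0 < N \<Longrightarrow> \<exists>n<N. submax_rank N I X = mode_rank N I X n"
proof (cases "N = 1")
  case False
  assume "0 < N"
  let ?ranks = "rev (sort (map (mode_rank N I X) [0..<N]))"
  have "?ranks ! 1 \<in> set ?ranks" using False \<open>0 < N\<close> by (intro nth_mem) simp
  then show ?thesis using False by (auto simp: submax_rank_def)
qed (simp add: submax_rank_def)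

theorem corollary3p6:
  fixes N :: nat and I :: "nat \<Rightarrow> nat" and X :: "(nat \<Rightarrow> nat) \<Rightarrow> real"
    and r :: "nat \<Rightarrow> (nat \<Rightarrow> nat) \<Rightarrow> ((nat \<Rightarrow> nat) \<Rightarrow> real) \<Rightarrow> nat"
  assumes "N \<ge> 1"
    and "\<forall>n<N. I n \<ge> 1"
    and "\<exists>i\<in>tidx N I. X i \<noteq> 0"
    and "r = max_rank \<or> r = submax_rank"
  shows "\<exists>J Y. is_subtensor N I X J Y \<and> r N I X = r N J Y \<and> (\<exists>n<N. r N J Y = J n)"
proof -
  have attained: "\<exists>n<N. r N I X = mode_rank N I X n"
    using assms(1,4) max_rank_attained submax_rank_attained by fastforce
  have invariant: "r N J Y = r N I X"
    if "\<And>k. k < N \<Longrightarrow> mode_rank N J Y k = mode_rank N I X k" for J Y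
    using assms(4) max_rank_cong[OF that] submax_rank_cong[OF that] by blast
  from attained obtain n where n: "n < N" "r N I X = mode_rank N I X n" by blast
  obtain J Y where J_Y: "is_subtensor N I X J Y"
      "\<forall>k<N. mode_rank N J Y k = mode_rank N I X k" "J n = mode_rank N I X n"
    using exists_subtensor_preserving_mode_ranks[OF n(1) assms(2,3)] by blast
  have same_r: "r N J Y = r N I X" using invariant[of J Y] J_Y(2) by simp
  with n(2) J_Y(3) have "r N J Y = J n" by simp
  with same_r J_Y(1) n(1) show ?thesis by metis
qed

end
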